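(* Let $G$ be a finite simple connected graph and $w$ a non-negative real function on the edges of $G$. Let $d_s$ be the shortest-path distance on the vertices of $G$, and define $\pi(u,u)=0$ and, for distinct vertices $u,v$, \[\pi(u,v) = \min\left\{ \frac{p(\gamma)}{p(\gamma)+1} : \gamma \text{ is a shortest path between } u \text{ and } v\right\},\] where $p(\gamma) = \prod_{e \in \gamma} w(e)$ is the product of the weights of the edges of $\gamma$. Then $d^{\pi}_w := d_s + \pi$ is a metric on the vertex set of $G$. *)

theory Defs
  imports Complex_Main
begin

text \<open>A finite simple graph: finite vertex set V, symmetric irreflexive edge relation E on V.
  Edge weights are functions on (undirected) edges, represented as two-element sets {u,v}.\<close>

definition simple_graph :: "'a set \<Rightarrow> ('a \<Rightarrow> 'a \<Rightarrow> bool) \<Rightarrow> bool" where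
  "simple_graph V E \<longleftrightarrow> finite V \<and> (\<forall>u v. E u v \<longrightarrow> u \<in> V \<and> v \<in> V)
     \<and> (\<forall>u v. E u v \<longrightarrow> E v u) \<and> (\<forall>u. \<not> E u u)"

definition walk_between :: "'a set \<Rightarrow> ('a \<Rightarrow> 'a \<Rightarrow> bool) \<Rightarrow> 'a \<Rightarrow> 'a \<Rightarrow> 'a list \<Rightarrow> bool" where
  "walk_between V E u v xs \<longleftrightarrow> xs \<noteq> [] \<and> set xs \<subseteq> V \<and> successively E xs
     \<and> hd xs = u \<and> last xs = v"

definition connected_graph :: "'a set \<Rightarrow> ('a \<Rightarrow> 'a \<Rightarrow> bool) \<Rightarrow> bool" where
  "connected_graph V E \<longleftrightarrow> (\<forall>u\<in>V. \<forall>v\<in>V. \<exists>xs. walk_between V E u v xs)"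

definition dist_s :: "'a set \<Rightarrow> ('a \<Rightarrow> 'a \<Rightarrow> bool) \<Rightarrow> 'a \<Rightarrow> 'a \<Rightarrow> nat" where
  "dist_s V E u v = (LEAST n. \<exists>xs. walk_between V E u v xs \<and> length xs = Suc n)"

text \<open>Shortest paths between u and v (walks of minimal length; these are automatically paths).\<close>
definition shortest_path :: "'a set \<Rightarrow> ('a \<Rightarrow> 'a \<Rightarrow> bool) \<Rightarrow> 'a \<Rightarrow> 'a \<Rightarrow> 'a list \<Rightarrow> bool" where
  "shortest_path V E u v xs \<longleftrightarrow> walk_between V E u v xs \<and> length xs = Suc (dist_s V E u v)"

definition path_weight :: "('a set \<Rightarrow> real) \<Rightarrow> 'a list \<Rightarrow> real" where
  "path_weight w xs = prod_list (map (\<lambda>(x, y). w {x, y}) (zip xs (tl xs)))"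

definition pi_w :: "'a set \<Rightarrow> ('a \<Rightarrow> 'a \<Rightarrow> bool) \<Rightarrow> ('a set \<Rightarrow> real) \<Rightarrow> 'a \<Rightarrow> 'a \<Rightarrow> real" where
  "pi_w V E w u v = (if u = v then 0 else
     Min {path_weight w xs / (path_weight w xs + 1) | xs. shortest_path V E u v xs})"

definition d_pi :: "'a set \<Rightarrow> ('a \<Rightarrow> 'a \<Rightarrow> bool) \<Rightarrow> ('a set \<Rightarrow> real) \<Rightarrow> 'a \<Rightarrow> 'a \<Rightarrow> real" where
  "d_pi V E w u v = real (dist_s V E u v) + pi_w V E w u v"

definition metric_on :: "'a set \<Rightarrow> ('a \<Rightarrow> 'a \<Rightarrow> real) \<Rightarrow> bool" where
  "metric_on V d \<longleftrightarrow>
     (\<forall>x\<in>V. \<forall>y\<in>V. d x y \<ge> 0 \<and> (d x y = 0 \<longleftrightarrow> x = y) \<and> d x y = d y x)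
     \<and> (\<forall>x\<in>V. \<forall>y\<in>V. \<forall>z\<in>V. d x z \<le> d x y + d y z)"

end

theory Submission
  imports Defs
begin

text \<open>Symmetry and definiteness of d_s + pi are inherited from d_s, since reversing a shortest
  path gives a shortest path of the same weight, and 0 \<le> pi < 1. For the triangle inequality, if
  d_s(x,z) < d_s(x,y) + d_s(y,z), the integer gap is at least 1 and absorbs pi(x,z). Otherwise
  shortest paths from x to y and from y to z concatenate to a shortest path from x to z of weight
  p1 p2, and f(t) = t/(t+1) satisfies f(p1 p2) \<le> f(p1) + f(p2): if one factor is at most 1, this
  is monotonicity of f; if both exceed 1, the right side is at least 1 > f(p1 p2).\<close>

lemma frac_plus_one_mono:
  fixes s t :: real
  assumes "0 \<le> s" "s \<le> t"
  shows "s / (s + 1) \<le> t / (t + 1)"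
  using assms by (simp add: divide_simps algebra_simps)

lemma frac_plus_one_less_one:
  fixes t :: real
  assumes "0 \<le> t"
  shows "t / (t + 1) < 1"
  using assms by simp

lemma frac_plus_one_mult_le_add:
  fixes a b :: real
  assumes "0 \<le> a" "0 \<le> b"
  shows "a * b / (a * b + 1) \<le> a / (a + 1) + b / (b + 1)"
proof -
  consider "a \<le> 1" | "b \<le> 1" | "1 < a" "1 < b" by linarith
  then show ?thesis
  proof cases
    case 1
    then have "a * b / (a * b + 1) \<le> b / (b + 1)"
      using assms by (intro frac_plus_one_mono) (simp_all add: mult_left_le_one_le)
    moreover have "0 \<le> a / (a + 1)" using assms by simp
    ultimately show ?thesis by linarith
  next
    case 2
    then have "a * b / (a * b + 1) \<le> a / (a + 1)"
      using assms by (intro frac_plus_one_mono) (simp_all add: mult_right_le_one_le)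
    moreover have "0 \<le> b / (b + 1)" using assms by simp
    ultimately show ?thesis by linarith
  next
    case 3
    then have "1 / 2 \<le> a / (a + 1)" "1 / 2 \<le> b / (b + 1)" by (simp_all add: field_simps)
    moreover have "a * b / (a * b + 1) < 1"
      using assms by (intro frac_plus_one_less_one) simp
    ultimately show ?thesis by linarith
  qed
qed

lemma path_weight_Nil [simp]: "path_weight w [] = 1"
  by (simp add: path_weight_def)

lemma path_weight_singleton [simp]: "path_weight w [x] = 1"
  by (simp add: path_weight_def)

lemma path_weight_Cons_Cons [simp]:
  "path_weight w (x # y # xs) = w {x, y} * path_weight w (y # xs)"
  by (simp add: path_weight_def)

lemma path_weight_append:
  assumes "xs \<noteq> []" "ys \<noteq> []" "last xs = hd ys"
  shows "path_weight w (xs @ tl ys) = path_weight w xs * path_weight w ys"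
  using assms
proof (induction xs rule: induct_list012)
  case (2 x)
  then show ?case by (cases ys) auto
qed auto

lemma path_weight_rev: "path_weight w (rev xs) = path_weight w xs"
proof (induction xs rule: induct_list012)
  case (3 x y xs)
  have "path_weight w (rev (x # y # xs)) = path_weight w (rev (y # xs) @ tl [y, x])"
    by simp
  also have "\<dots> = path_weight w (rev (y # xs)) * path_weight w [y, x]"
    by (rule path_weight_append) (simp_all add: last_rev)
  finally show ?case using 3 by (simp add: insert_commute)
qed auto

lemma path_weight_nonneg:
  assumes "successively E xs" and "\<And>u v. E u v \<Longrightarrow> w {u, v} \<ge> 0"
  shows "path_weight w xs \<ge> 0"
  using assms(1) by (induction xs rule: induct_list012) (simp_all add: assms(2))

lemma walk_between_append:
  assumes "walk_between V E x y xs" "walk_between V E y z ys"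
  shows "walk_between V E x z (xs @ tl ys)"
proof -
  obtain ys' where ys: "ys = y # ys'"
    using assms(2) unfolding walk_between_def by (cases ys) auto
  have "successively E (xs @ ys')"
    using assms unfolding walk_between_def ys
    by (cases ys') (auto simp: successively_append_iff)
  moreover have "last (xs @ ys') = z"
    using assms unfolding walk_between_def ys by (cases "ys' = []") auto
  ultimately show ?thesis
    using assms unfolding walk_between_def ys by simp
qed

lemma walk_between_rev:
  assumes "symp E" "walk_between V E u v xs"
  shows "walk_between V E v u (rev xs)"
proof -
  have "successively (\<lambda>x y. E y x) xs"
    using assms by (metis successively_mono sympD walk_between_def)
  then show ?thesis
    using assms(2) by (simp add: walk_between_def hd_rev last_rev)
qed

lemma dist_s_less_length:
  assumes "walk_between V E u v xs"
  shows "dist_s V E u v < length xs"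
proof -
  have len: "length xs = Suc (length xs - 1)"
    using assms by (simp add: walk_between_def)
  then have "dist_s V E u v \<le> length xs - 1"
    unfolding dist_s_def using assms by (intro Least_le) blast
  then show ?thesis using len by linarith
qed

lemma shortest_path_exists:
  assumes "walk_between V E u v xs"
  shows "\<exists>ys. shortest_path V E u v ys"
proof -
  have "length xs = Suc (length xs - 1)"
    using assms by (simp add: walk_between_def)
  then have "\<exists>n ys. walk_between V E u v ys \<and> length ys = Suc n"
    using assms by blast
  then show ?thesis
    unfolding shortest_path_def dist_s_def by (rule LeastI_ex)
qed

lemma dist_s_self: "u \<in> V \<Longrightarrow> dist_s V E u u = 0"
  using dist_s_less_length[of V E u u "[u]"] by (simp add: walk_between_def)

lemma dist_s_eq_0_imp_eq:
  assumes "walk_between V E u v xs" "dist_s V E u v = 0"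
  shows "u = v"
proof -
  obtain ys where "walk_between V E u v ys" "length ys = 1"
    using shortest_path_exists[OF assms(1)] assms(2) unfolding shortest_path_def by auto
  then show ?thesis by (cases ys) (simp_all add: walk_between_def)
qed

lemma dist_s_sym:
  assumes "symp E"
  shows "dist_s V E u v = dist_s V E v u"
proof -
  have "(\<exists>xs. walk_between V E u v xs \<and> length xs = n)
      \<longleftrightarrow> (\<exists>xs. walk_between V E v u xs \<and> length xs = n)" for n
    using walk_between_rev[OF assms] by (metis length_rev)
  then show ?thesis unfolding dist_s_def by simp
qed

lemma dist_s_triangle:
  assumes "walk_between V E x y xs" "walk_between V E y z ys"
  shows "dist_s V E x z \<le> dist_s V E x y + dist_s V E y z"
proof -
  obtain g\<^sub>1 g\<^sub>2 where "shortest_path V E x y g\<^sub>1" "shortest_path V E y z g\<^sub>2"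
    using shortest_path_exists assms by metis
  then have "walk_between V E x z (g\<^sub>1 @ tl g\<^sub>2)"
    and "length (g\<^sub>1 @ tl g\<^sub>2) = Suc (dist_s V E x y + dist_s V E y z)"
    unfolding shortest_path_def by (auto intro: walk_between_append)
  then show ?thesis using dist_s_less_length by fastforce
qed

lemma shortest_path_rev:
  assumes "symp E" "shortest_path V E u v xs"
  shows "shortest_path V E v u (rev xs)"
  using assms walk_between_rev dist_s_sym unfolding shortest_path_def by fastforce

lemma shortest_path_append:
  assumes "shortest_path V E x y xs" "shortest_path V E y z ys"
    and "dist_s V E x z = dist_s V E x y + dist_s V E y z"
  shows "shortest_path V E x z (xs @ tl ys)"
  using assms walk_between_append unfolding shortest_path_def by fastforce

lemma finite_shortest_paths:
  assumes "finite V"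
  shows "finite {xs. shortest_path V E u v xs}"
proof (rule finite_subset)
  show "{xs. shortest_path V E u v xs}
      \<subseteq> {xs. set xs \<subseteq> V \<and> length xs = Suc (dist_s V E u v)}"
    unfolding shortest_path_def walk_between_def by auto
qed (use assms finite_lists_length_eq in blast)

lemma pi_w_sym:
  assumes "symp E"
  shows "pi_w V E w u v = pi_w V E w v u"
proof -
  have incl: "{path_weight w xs / (path_weight w xs + 1) | xs. shortest_path V E a b xs}
      \<subseteq> {path_weight w xs / (path_weight w xs + 1) | xs. shortest_path V E b a xs}" for a b
  proof clarify
    fix xs assume "shortest_path V E a b xs"
    then have "shortest_path V E b a (rev xs)" by (rule shortest_path_rev[OF assms])
    then show "\<exists>ys. path_weight w xs / (path_weight w xs + 1)
        = path_weight w ys / (path_weight w ys + 1) \<and> shortest_path V E b a ys"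
      by (metis path_weight_rev)
  qed
  have "{path_weight w xs / (path_weight w xs + 1) | xs. shortest_path V E u v xs}
      = {path_weight w xs / (path_weight w xs + 1) | xs. shortest_path V E v u xs}"
    by (rule subset_antisym[OF incl incl])
  then show ?thesis unfolding pi_w_def by simp
qed

lemma pi_w_le:
  assumes "finite V" "u \<noteq> v" "shortest_path V E u v xs"
  shows "pi_w V E w u v \<le> path_weight w xs / (path_weight w xs + 1)"
proof -
  have "finite {path_weight w xs / (path_weight w xs + 1) | xs. shortest_path V E u v xs}"
    using finite_shortest_paths[OF assms(1)] by simp
  then show ?thesis
    unfolding pi_w_def using assms(2,3) by (auto intro: Min_le)
qed

lemma pi_w_attained:
  assumes "finite V" "u \<noteq> v" "walk_between V E u v xs"
  obtains ys where "shortest_path V E u v ys"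
    and "pi_w V E w u v = path_weight w ys / (path_weight w ys + 1)"
proof -
  let ?S = "{path_weight w xs / (path_weight w xs + 1) | xs. shortest_path V E u v xs}"
  have "finite ?S"
    using finite_shortest_paths[OF assms(1)] by simp
  moreover have "?S \<noteq> {}"
    using shortest_path_exists[OF assms(3)] by blast
  ultimately have "Min ?S \<in> ?S" by (rule Min_in)
  then show ?thesis
    using that assms(2) unfolding pi_w_def by auto
qed

lemma pi_w_bounds:
  assumes "finite V" "walk_between V E u v xs" and "\<And>u v. E u v \<Longrightarrow> w {u, v} \<ge> 0"
  shows "0 \<le> pi_w V E w u v" "pi_w V E w u v < 1"
proof -
  have "0 \<le> pi_w V E w u v \<and> pi_w V E w u v < 1"
  proof (cases "u = v")
    case False
    then obtain ys where "shortest_path V E u v ys"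
      and pi: "pi_w V E w u v = path_weight w ys / (path_weight w ys + 1)"
      using pi_w_attained assms(1,2) by metis
    then have "path_weight w ys \<ge> 0"
      using path_weight_nonneg assms(3) unfolding shortest_path_def walk_between_def by blast
    then show ?thesis using pi by simp
  qed (simp add: pi_w_def)
  then show "0 \<le> pi_w V E w u v" "pi_w V E w u v < 1" by auto
qed

lemma pi_w_triangle_geodesic:
  assumes "finite V" and "\<And>u v. E u v \<Longrightarrow> w {u, v} \<ge> 0"
    and "x \<noteq> y" "y \<noteq> z" "x \<noteq> z"
    and "walk_between V E x y xs" "walk_between V E y z ys"
    and "dist_s V E x z = dist_s V E x y + dist_s V E y z"
  shows "pi_w V E w x z \<le> pi_w V E w x y + pi_w V E w y z"
proof -
  obtain g\<^sub>1 where g\<^sub>1: "shortest_path V E x y g\<^sub>1"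
    and pi\<^sub>1: "pi_w V E w x y = path_weight w g\<^sub>1 / (path_weight w g\<^sub>1 + 1)"
    using pi_w_attained assms(1,3,6) by metis
  obtain g\<^sub>2 where g\<^sub>2: "shortest_path V E y z g\<^sub>2"
    and pi\<^sub>2: "pi_w V E w y z = path_weight w g\<^sub>2 / (path_weight w g\<^sub>2 + 1)"
    using pi_w_attained assms(1,4,7) by metis
  have nonneg\<^sub>1: "path_weight w g\<^sub>1 \<ge> 0" and nonneg\<^sub>2: "path_weight w g\<^sub>2 \<ge> 0"
    using g\<^sub>1 g\<^sub>2 path_weight_nonneg assms(2) unfolding shortest_path_def walk_between_def
    by blast+
  have "path_weight w (g\<^sub>1 @ tl g\<^sub>2) = path_weight w g\<^sub>1 * path_weight w g\<^sub>2"
    using g\<^sub>1 g\<^sub>2 unfolding shortest_path_def walk_between_def by (intro path_weight_append) auto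
  moreover have "shortest_path V E x z (g\<^sub>1 @ tl g\<^sub>2)"
    using shortest_path_append[OF g\<^sub>1 g\<^sub>2 assms(8)] .
  ultimately have "pi_w V E w x z
      \<le> path_weight w g\<^sub>1 * path_weight w g\<^sub>2 / (path_weight w g\<^sub>1 * path_weight w g\<^sub>2 + 1)"
    using pi_w_le[OF assms(1,5)] by metis
  also have "\<dots> \<le> pi_w V E w x y + pi_w V E w y z"
    unfolding pi\<^sub>1 pi\<^sub>2 using nonneg\<^sub>1 nonneg\<^sub>2 by (rule frac_plus_one_mult_le_add)
  finally show ?thesis .
qed

lemma d_pi_self: "u \<in> V \<Longrightarrow> d_pi V E w u u = 0"
  by (simp add: d_pi_def pi_w_def dist_s_self)

lemma d_pi_nonneg:
  assumes "finite V" "walk_between V E u v xs" and "\<And>u v. E u v \<Longrightarrow> w {u, v} \<ge> 0"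
  shows "0 \<le> d_pi V E w u v"
  using pi_w_bounds(1)[of V E u v xs w] assms unfolding d_pi_def by simp

lemma d_pi_triangle:
  assumes "finite V" "connected_graph V E" and "\<And>u v. E u v \<Longrightarrow> w {u, v} \<ge> 0"
    and "x \<in> V" "y \<in> V" "z \<in> V"
  shows "d_pi V E w x z \<le> d_pi V E w x y + d_pi V E w y z"
proof -
  have walk: "\<exists>xs. walk_between V E a b xs" if "a \<in> V" "b \<in> V" for a b
    using assms(2) that unfolding connected_graph_def by blast
  have pi_bounds: "0 \<le> pi_w V E w a b" "pi_w V E w a b < 1" if "a \<in> V" "b \<in> V" for a b
    using pi_w_bounds walk[OF that] assms(1,3) by metis+
  obtain xs ys where xs: "walk_between V E x y xs" and ys: "walk_between V E y z ys"
    using walk assms(4-6) by metis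
  consider "x = y \<or> y = z \<or> x = z"
    | "x \<noteq> y" "y \<noteq> z" "x \<noteq> z" "dist_s V E x z = dist_s V E x y + dist_s V E y z"
    | "dist_s V E x z < dist_s V E x y + dist_s V E y z"
    using dist_s_triangle[OF xs ys] by linarith
  then show ?thesis
  proof cases
    case 1
    moreover have "0 \<le> d_pi V E w x y" "0 \<le> d_pi V E w y z"
      using d_pi_nonneg[of V E] xs ys assms(1,3) by blast+
    ultimately show ?thesis
      using d_pi_self[of _ V E w] assms(4-6) by auto
  next
    case 2
    then show ?thesis
      using pi_w_triangle_geodesic[of V E w, OF assms(1,3) 2(1-3) xs ys 2(4)] unfolding d_pi_def by simp
  next
    case 3
    then have "real (dist_s V E x z) + 1 \<le> real (dist_s V E x y) + real (dist_s V E y z)"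
      by linarith
    moreover have "pi_w V E w x z < 1" "0 \<le> pi_w V E w x y" "0 \<le> pi_w V E w y z"
      using pi_bounds assms(4-6) by blast+
    ultimately show ?thesis unfolding d_pi_def by linarith
  qed
qed

theorem theorem3:
  fixes V :: "'a set" and E :: "'a \<Rightarrow> 'a \<Rightarrow> bool" and w :: "'a set \<Rightarrow> real"
  assumes "simple_graph V E"
    and "connected_graph V E"
    and "\<And>u v. E u v \<Longrightarrow> w {u, v} \<ge> 0"
  shows "metric_on V (d_pi V E w)"
  unfolding metric_on_def
proof (intro conjI ballI)
  have "finite V" and "symp E"
    using assms(1) unfolding simple_graph_def symp_def by blast+
  fix u v assume uv: "u \<in> V" "v \<in> V"
  then obtain xs where xs: "walk_between V E u v xs"
    using assms(2) unfolding connected_graph_def by blast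
  have "0 \<le> pi_w V E w u v"
    using pi_w_bounds(1)[OF \<open>finite V\<close> xs] assms(3) by blast
  then show "0 \<le> d_pi V E w u v" and "d_pi V E w u v = 0 \<longleftrightarrow> u = v"
    using dist_s_eq_0_imp_eq[OF xs] d_pi_self[OF uv(1)] unfolding d_pi_def by auto
  show "d_pi V E w u v = d_pi V E w v u"
    unfolding d_pi_def dist_s_sym[OF \<open>symp E\<close>, of V u v] pi_w_sym[OF \<open>symp E\<close>, of V w u v] ..
next
  have "finite V"
    using assms(1) unfolding simple_graph_def by blast
  fix x y z assume "x \<in> V" "y \<in> V" "z \<in> V"
  then show "d_pi V E w x z \<le> d_pi V E w x y + d_pi V E w y z"
    using d_pi_triangle[of V E w] \<open>finite V\<close> assms(2,3) by blast
qed

end
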